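(* Assume the univalence axiom. Suppose given short exact sequences $A\xrightarrow{i}E\xrightarrow{p}B'$ and $A'\xrightarrow{j}F\xrightarrow{q}B$ of abelian groups together with homomorphisms $f:A\to A'$, $\phi:E\to F$, $g:B'\to B$ such that $\phi\circ i = j\circ f$ and $q\circ\phi = g\circ p$. Then there is a path $f_*(E) = g^*(F)$ in $\mathrm{AbSES}(B',A')$.
   Context: We work in homotopy type theory with univalence. For abelian groups $A,B$, $\mathrm{AbSES}(B,A)$ is the type of short exact sequences $(E,i,p)$: $E$ an abelian group, $i:A\to E$ injective, $p:E\to B$ surjective, $p\circ i=0$, and $A\to\ker p$ surjective. For $g:B'\to B$ and $F=(F,j,q)\in\mathrm{AbSES}(B,A')$, the pullback $g^*(F)\in\mathrm{AbSES}(B',A')$ has middle group $F\times_B B'=\{(x,b')\mid q(x)=g(b')\}$ with the evident maps. For $f:A\to A'$ and $E=(E,i,p)\in\mathrm{AbSES}(B',A)$, the pushout $f_*(E)\in\mathrm{AbSES}(B',A')$ has middle group the pushout $(A'\oplus E)/\{(f(a),-i(a))\mid a\in A\}$, with inclusion induced by $A'\to A'\oplus E$ and projection induced by $(a',e)\mapsto p(e)$. *)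

theory Defs
  imports "HOL-Algebra.Algebra"
begin

definition is_ses ::
  "'a monoid \<Rightarrow> 'e monoid \<Rightarrow> 'b monoid \<Rightarrow> ('a \<Rightarrow> 'e) \<Rightarrow> ('e \<Rightarrow> 'b) \<Rightarrow> bool" where
  "is_ses A E B i p \<longleftrightarrow>
     comm_group A \<and> comm_group E \<and> comm_group B \<and>
     i \<in> hom A E \<and> p \<in> hom E B \<and>
     inj_on i (carrier A) \<and>
     p ` carrier E = carrier B \<and>
     (\<forall>a \<in> carrier A. p (i a) = \<one>\<^bsub>B\<^esub>) \<and>
     {e \<in> carrier E. p e = \<one>\<^bsub>B\<^esub>} \<subseteq> i ` carrier A"

definition pushout_rel ::
  "'e monoid \<Rightarrow> 'a monoid \<Rightarrow> ('a \<Rightarrow> 'c) \<Rightarrow> ('a \<Rightarrow> 'e) \<Rightarrow> ('c \<times> 'e) set" where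
  "pushout_rel E A f i = {(f a, inv\<^bsub>E\<^esub> (i a)) | a. a \<in> carrier A}"

definition pushout_grp ::
  "'a monoid \<Rightarrow> 'c monoid \<Rightarrow> 'e monoid \<Rightarrow> ('a \<Rightarrow> 'c) \<Rightarrow> ('a \<Rightarrow> 'e) \<Rightarrow> ('c \<times> 'e) set monoid" where
  "pushout_grp A A' E f i = (A' \<times>\<times> E) Mod (pushout_rel E A f i)"

definition pushout_inc ::
  "'a monoid \<Rightarrow> 'c monoid \<Rightarrow> 'e monoid \<Rightarrow> ('a \<Rightarrow> 'c) \<Rightarrow> ('a \<Rightarrow> 'e) \<Rightarrow> 'c \<Rightarrow> ('c \<times> 'e) set" where
  "pushout_inc A A' E f i a' = (pushout_rel E A f i) #>\<^bsub>A' \<times>\<times> E\<^esub> (a', \<one>\<^bsub>E\<^esub>)"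

text \<open>The projection is induced by (a',e) \<mapsto> p e; on a coset it is the unique value.\<close>

definition pushout_proj :: "('e \<Rightarrow> 'b) \<Rightarrow> ('c \<times> 'e) set \<Rightarrow> 'b" where
  "pushout_proj p C = the_elem ((\<lambda>(a', e). p e) ` C)"

definition pullback_grp ::
  "'f monoid \<Rightarrow> 'b monoid \<Rightarrow> ('f \<Rightarrow> 'd) \<Rightarrow> ('b \<Rightarrow> 'd) \<Rightarrow> ('f \<times> 'b) monoid" where
  "pullback_grp F B' q g =
     (F \<times>\<times> B')\<lparr>carrier := {(x, b'). x \<in> carrier F \<and> b' \<in> carrier B' \<and> q x = g b'}\<rparr>"

definition pullback_inc :: "'b monoid \<Rightarrow> ('c \<Rightarrow> 'f) \<Rightarrow> 'c \<Rightarrow> 'f \<times> 'b" where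
  "pullback_inc B' j a' = (j a', \<one>\<^bsub>B'\<^esub>)"

definition pullback_proj :: "'f \<times> 'b \<Rightarrow> 'b" where
  "pullback_proj = snd"

text \<open>An identification of two extensions in AbSES(B',A') (by univalence: a group
  isomorphism of middle groups commuting with inclusions and projections).\<close>

definition ses_iso ::
  "'c monoid \<Rightarrow> 'x monoid \<Rightarrow> ('c \<Rightarrow> 'x) \<Rightarrow> ('x \<Rightarrow> 'b) \<Rightarrow>
   'y monoid \<Rightarrow> ('c \<Rightarrow> 'y) \<Rightarrow> ('y \<Rightarrow> 'b) \<Rightarrow> bool" where
  "ses_iso A' G1 i1 p1 G2 i2 p2 \<longleftrightarrow>
     (\<exists>h. h \<in> iso G1 G2 \<and>
          (\<forall>a \<in> carrier A'. h (i1 a) = i2 a) \<and>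
          (\<forall>x \<in> carrier G1. p2 (h x) = p1 x))"

end

theory Submission
  imports Defs
begin

text \<open>The map \<open>A' \<oplus> E \<rightarrow> F \<times>\<^sub>B B'\<close>, \<open>(a', e) \<mapsto> (j a' + \<phi> e, p e)\<close>, is a surjective
  homomorphism (surjectivity uses exactness of \<open>F\<close> at the middle), and exactness of \<open>E\<close>
  together with injectivity of \<open>j\<close> shows that its kernel is precisely the pushout relation
  \<open>{(f a, -i a)}\<close>. The first isomorphism theorem then identifies \<open>f\<^sub>*(E)\<close> with \<open>g\<^sup>*(F)\<close>,
  and the induced isomorphism visibly commutes with the inclusions of \<open>A'\<close> and the
  projections to \<open>B'\<close>.\<close>

lemma (in group_hom) image_kernel_rcos:
  assumes "x \<in> carrier G"
  shows "h ` (kernel G H h #>\<^bsub>G\<^esub> x) = {h x}"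
  using assms by (auto simp add: kernel_def r_coset_def intro!: imageI)

lemma carrier_pullback_grp [simp]:
  "carrier (pullback_grp F B' q g) = {(x, b'). x \<in> carrier F \<and> b' \<in> carrier B' \<and> q x = g b'}"
  by (simp add: pullback_grp_def)

lemma one_pullback_grp [simp]: "\<one>\<^bsub>pullback_grp F B' q g\<^esub> = (\<one>\<^bsub>F\<^esub>, \<one>\<^bsub>B'\<^esub>)"
  by (simp add: pullback_grp_def)

lemma subgroup_pullback:
  assumes "group_hom F B q" and "group_hom B' B g"
  shows "subgroup {(x, b'). x \<in> carrier F \<and> b' \<in> carrier B' \<and> q x = g b'} (F \<times>\<times> B')"
proof -
  interpret q: group_hom F B q by fact
  interpret g: group_hom B' B g by fact
  show ?thesis
    by (rule group.subgroupI[OF DirProd_group[OF q.G.group_axioms g.G.group_axioms]])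
       (force simp: inv_DirProd q.G.group_axioms g.G.group_axioms)+
qed

lemma group_pullback_grp:
  assumes "group_hom F B q" and "group_hom B' B g"
  shows "group (pullback_grp F B' q g)"
proof -
  interpret q: group_hom F B q by fact
  interpret g: group_hom B' B g by fact
  show ?thesis
    unfolding pullback_grp_def
    using subgroup.subgroup_is_group[OF subgroup_pullback[OF assms]]
      DirProd_group[OF q.G.group_axioms g.G.group_axioms] .
qed

definition pushout_to_pullback ::
  "'f monoid \<Rightarrow> ('c \<Rightarrow> 'f) \<Rightarrow> ('e \<Rightarrow> 'f) \<Rightarrow> ('e \<Rightarrow> 'b) \<Rightarrow> 'c \<times> 'e \<Rightarrow> 'f \<times> 'b" where
  "pushout_to_pullback F j \<phi> p = (\<lambda>(a', e). (j a' \<otimes>\<^bsub>F\<^esub> \<phi> e, p e))"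

locale ses_morphism =
  fixes A :: "'a monoid" and E :: "'e monoid" and B' :: "'b monoid"
    and A' :: "'c monoid" and F :: "'f monoid" and B :: "'d monoid"
    and i :: "'a \<Rightarrow> 'e" and p :: "'e \<Rightarrow> 'b"
    and j :: "'c \<Rightarrow> 'f" and q :: "'f \<Rightarrow> 'd"
    and f :: "'a \<Rightarrow> 'c" and \<phi> :: "'e \<Rightarrow> 'f" and g :: "'b \<Rightarrow> 'd"
  assumes sesE: "is_ses A E B' i p"
    and sesF: "is_ses A' F B j q"
    and f_hom: "f \<in> hom A A'"
    and phi_hom: "\<phi> \<in> hom E F"
    and g_hom: "g \<in> hom B' B"
    and left_sq: "\<forall>a \<in> carrier A. \<phi> (i a) = j (f a)"
    and right_sq: "\<forall>e \<in> carrier E. q (\<phi> e) = g (p e)"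
begin

sublocale A: comm_group A using sesE unfolding is_ses_def by blast
sublocale E: comm_group E using sesE unfolding is_ses_def by blast
sublocale B': comm_group B' using sesE unfolding is_ses_def by blast
sublocale A': comm_group A' using sesF unfolding is_ses_def by blast
sublocale F: comm_group F using sesF unfolding is_ses_def by blast
sublocale B: comm_group B using sesF unfolding is_ses_def by blast

sublocale i: group_hom A E i
  using sesE unfolding is_ses_def by (simp add: group_hom_def group_hom_axioms_def)
sublocale p: group_hom E B' p
  using sesE unfolding is_ses_def by (simp add: group_hom_def group_hom_axioms_def)
sublocale j: group_hom A' F j
  using sesF unfolding is_ses_def by (simp add: group_hom_def group_hom_axioms_def)
sublocale q: group_hom F B q
  using sesF unfolding is_ses_def by (simp add: group_hom_def group_hom_axioms_def)
sublocale f: group_hom A A' f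
  using f_hom by (simp add: group_hom_def group_hom_axioms_def)
sublocale \<phi>: group_hom E F \<phi>
  using phi_hom by (simp add: group_hom_def group_hom_axioms_def)
sublocale g: group_hom B' B g
  using g_hom by (simp add: group_hom_def group_hom_axioms_def)

lemma p_surj: "p ` carrier E = carrier B'"
  and p_i: "a \<in> carrier A \<Longrightarrow> p (i a) = \<one>\<^bsub>B'\<^esub>"
  and kernel_p: "\<lbrakk>e \<in> carrier E; p e = \<one>\<^bsub>B'\<^esub>\<rbrakk> \<Longrightarrow> e \<in> i ` carrier A"
  using sesE unfolding is_ses_def by auto

lemma j_inj: "inj_on j (carrier A')"
  and q_j: "a' \<in> carrier A' \<Longrightarrow> q (j a') = \<one>\<^bsub>B\<^esub>"
  and kernel_q: "\<lbrakk>x \<in> carrier F; q x = \<one>\<^bsub>B\<^esub>\<rbrakk> \<Longrightarrow> x \<in> j ` carrier A'"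
  using sesF unfolding is_ses_def by auto

abbreviation "\<psi> \<equiv> pushout_to_pullback F j \<phi> p"

lemma pushout_to_pullback_hom: "\<psi> \<in> hom (A' \<times>\<times> E) (pullback_grp F B' q g)"
proof (rule homI)
  fix x assume "x \<in> carrier (A' \<times>\<times> E)"
  then show "\<psi> x \<in> carrier (pullback_grp F B' q g)"
    using right_sq q_j by (auto simp: pushout_to_pullback_def)
next
  fix x y assume "x \<in> carrier (A' \<times>\<times> E)" "y \<in> carrier (A' \<times>\<times> E)"
  then show "\<psi> (x \<otimes>\<^bsub>A' \<times>\<times> E\<^esub> y) = \<psi> x \<otimes>\<^bsub>pullback_grp F B' q g\<^esub> \<psi> y"
    by (auto simp: pushout_to_pullback_def pullback_grp_def F.m_ac)
qed

sublocale \<psi>: group_hom "A' \<times>\<times> E" "pullback_grp F B' q g" \<psi>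
  using DirProd_group[OF A'.group_axioms E.group_axioms]
    group_pullback_grp[OF q.group_hom_axioms g.group_hom_axioms] pushout_to_pullback_hom
  by (simp add: group_hom_def group_hom_axioms_def)

lemma pushout_to_pullback_surj:
  "\<psi> ` carrier (A' \<times>\<times> E) = carrier (pullback_grp F B' q g)"
proof
  show "carrier (pullback_grp F B' q g) \<subseteq> \<psi> ` carrier (A' \<times>\<times> E)"
  proof
    fix y assume "y \<in> carrier (pullback_grp F B' q g)"
    then obtain x b' where y: "y = (x, b')" and x: "x \<in> carrier F" and b': "b' \<in> carrier B'"
      and qx: "q x = g b'" by auto
    obtain e where e: "e \<in> carrier E" and pe: "p e = b'" using p_surj b' by (metis imageE)
    have "q (x \<otimes>\<^bsub>F\<^esub> inv\<^bsub>F\<^esub> (\<phi> e)) = \<one>\<^bsub>B\<^esub>"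
      using x e qx pe right_sq b' by simp
    then obtain a' where a': "a' \<in> carrier A'" and ja': "j a' = x \<otimes>\<^bsub>F\<^esub> inv\<^bsub>F\<^esub> (\<phi> e)"
      using kernel_q x e by (metis F.m_closed F.inv_closed \<phi>.hom_closed imageE)
    have "\<psi> (a', e) = y" using ja' x e pe by (simp add: pushout_to_pullback_def y F.m_assoc)
    with a' e show "y \<in> \<psi> ` carrier (A' \<times>\<times> E)" by force
  qed
qed (rule \<psi>.hom_closed[THEN image_subsetI])

lemma kernel_pushout_to_pullback:
  "kernel (A' \<times>\<times> E) (pullback_grp F B' q g) \<psi> = pushout_rel E A f i"
proof
  show "kernel (A' \<times>\<times> E) (pullback_grp F B' q g) \<psi> \<subseteq> pushout_rel E A f i"
  proof
    fix x assume "x \<in> kernel (A' \<times>\<times> E) (pullback_grp F B' q g) \<psi>"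
    then obtain a' e where x: "x = (a', e)" and a': "a' \<in> carrier A'" and e: "e \<in> carrier E"
      and kernel_eq: "j a' \<otimes>\<^bsub>F\<^esub> \<phi> e = \<one>\<^bsub>F\<^esub>" and pe: "p e = \<one>\<^bsub>B'\<^esub>"
      by (auto simp: kernel_def pushout_to_pullback_def)
    obtain a where a: "a \<in> carrier A" and e_ia: "e = i a" using kernel_p e pe by blast
    have "j a' = inv\<^bsub>F\<^esub> (\<phi> e)" using kernel_eq a' e F.inv_equality by simp
    also have "\<dots> = j (f (inv\<^bsub>A\<^esub> a))" using e_ia a left_sq by simp
    finally have "a' = f (inv\<^bsub>A\<^esub> a)" using j_inj a' a by (simp add: inj_on_def)
    moreover have "e = inv\<^bsub>E\<^esub> (i (inv\<^bsub>A\<^esub> a))" using e_ia a by simp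
    ultimately show "x \<in> pushout_rel E A f i" unfolding pushout_rel_def x using a by blast
  qed
  show "pushout_rel E A f i \<subseteq> kernel (A' \<times>\<times> E) (pullback_grp F B' q g) \<psi>"
    using left_sq p_i by (auto simp: pushout_rel_def kernel_def pushout_to_pullback_def)
qed

lemma pushout_ses_iso_pullback:
  "ses_iso A'
     (pushout_grp A A' E f i) (pushout_inc A A' E f i) (pushout_proj p)
     (pullback_grp F B' q g) (pullback_inc B' j) pullback_proj"
  unfolding ses_iso_def
proof (intro exI conjI ballI)
  show "(\<lambda>C. the_elem (\<psi> ` C)) \<in> iso (pushout_grp A A' E f i) (pullback_grp F B' q g)"
    using \<psi>.FactGroup_iso_set[OF pushout_to_pullback_surj]
    by (simp add: kernel_pushout_to_pullback pushout_grp_def)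
next
  fix a' assume "a' \<in> carrier A'"
  then have "\<psi> ` pushout_inc A A' E f i a' = {\<psi> (a', \<one>\<^bsub>E\<^esub>)}"
    using \<psi>.image_kernel_rcos[of "(a', \<one>\<^bsub>E\<^esub>)"]
    by (simp add: pushout_inc_def kernel_pushout_to_pullback)
  with \<open>a' \<in> carrier A'\<close>
  show "the_elem (\<psi> ` pushout_inc A A' E f i a') = pullback_inc B' j a'"
    by (simp add: pullback_inc_def pushout_to_pullback_def)
next
  fix C assume "C \<in> carrier (pushout_grp A A' E f i)"
  then obtain x where x: "x \<in> carrier (A' \<times>\<times> E)" and C: "C = pushout_rel E A f i #>\<^bsub>A' \<times>\<times> E\<^esub> x"
    by (auto simp: pushout_grp_def FactGroup_def RCOSETS_def)
  then have \<psi>C: "\<psi> ` C = {\<psi> x}"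
    using \<psi>.image_kernel_rcos by (simp add: kernel_pushout_to_pullback)
  have "(\<lambda>(a', e). p e) ` C = snd ` \<psi> ` C"
    by (force simp: pushout_to_pullback_def image_image split: prod.splits)
  then show "pullback_proj (the_elem (\<psi> ` C)) = pushout_proj p C"
    by (simp add: \<psi>C pushout_proj_def pullback_proj_def)
qed

end

theorem corollary8:
  fixes A :: "'a monoid" and E :: "'e monoid" and B' :: "'b monoid"
    and A' :: "'c monoid" and F :: "'f monoid" and B :: "'d monoid"
    and i :: "'a \<Rightarrow> 'e" and p :: "'e \<Rightarrow> 'b"
    and j :: "'c \<Rightarrow> 'f" and q :: "'f \<Rightarrow> 'd"
    and f :: "'a \<Rightarrow> 'c" and \<phi> :: "'e \<Rightarrow> 'f" and g :: "'b \<Rightarrow> 'd"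
  assumes sesE: "is_ses A E B' i p"
    and sesF: "is_ses A' F B j q"
    and f_hom: "f \<in> hom A A'"
    and phi_hom: "\<phi> \<in> hom E F"
    and g_hom: "g \<in> hom B' B"
    and left_sq: "\<forall>a \<in> carrier A. \<phi> (i a) = j (f a)"
    and right_sq: "\<forall>e \<in> carrier E. q (\<phi> e) = g (p e)"
  shows "ses_iso A'
           (pushout_grp A A' E f i) (pushout_inc A A' E f i) (pushout_proj p)
           (pullback_grp F B' q g) (pullback_inc B' j) pullback_proj"
proof -
  interpret ses_morphism A E B' A' F B i p j q f \<phi> g
    using assms by unfold_locales
  show ?thesis by (rule pushout_ses_iso_pullback)
qed

end
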